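(* Let $k\ge 1$, $a_1,\dots,a_k,b_1,\dots,b_k,c_1,\dots,c_k\in\mathbb{C}$, and let $T(f)$ be the tridiagonal $k$-Toeplitz operator on $\ell^2(\mathbb{N})$ with symbol $f(z)=A_{-1}z^{-1}+A_0+A_1z$ (notation in the context). Assume that $\det f(z)$ does not vanish identically on the unit circle $\mathbb{T}$. Then at least one of the following holds: (i) $T(f)$ has trivial kernel; (ii) $T(f)$ has dense range; (iii) the leading $(k-1)\times(k-1)$ principal submatrix of $A_0$ has a nonzero kernel; in particular, there exists $z_0\in\mathbb{C}\cup\{\infty\}$ such that $\ker(z_0^{-1}A_{-1}+A_0)\cap\ker(A_1)\neq\{0\}$.
   Context: The tridiagonal $k$-Toeplitz operator $T(f)$ is the operator on $\ell^2(\mathbb{N})$ (indices $1,2,\dots$) given by the infinite matrix with entries $(i,i)=a_{p(i)}$, $(i,i+1)=b_{p(i)}$, $(i+1,i)=c_{p(i)}$, where $p(i)=((i-1)\bmod k)+1$, and all other entries zero. Equivalently it is the block Toeplitz operator with $k\times k$ blocks $A_0$ on the block diagonal, $A_{-1}$ on the block superdiagonal and $A_1$ on the block subdiagonal, where $A_0$ is the $k\times k$ tridiagonal matrix with diagonal $a_1,\dots,a_k$, superdiagonal $b_1,\dots,b_{k-1}$ and subdiagonal $c_1,\dots,c_{k-1}$; $A_{-1}$ has the single nonzero entry $b_k$ in position $(k,1)$; $A_1$ has the single nonzero entry $c_k$ in position $(1,k)$. The symbol is $f(z)=A_{-1}z^{-1}+A_0+A_1z$, i.e. $A_0$ with $c_kz$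 added in position $(1,k)$ and $b_kz^{-1}$ added in position $(k,1)$ (for $k=1$, $f(z)=a_1+c_1z+b_1z^{-1}$). $\mathbb{T}=\{z\in\mathbb{C}:|z|=1\}$. *)

theory Defs
  imports Complex_Main "Jordan_Normal_Form.Determinant"
begin

text \<open>Conventions: indices are 0-based. The parameters a_1..a_k, b_1..b_k, c_1..c_k of the
paper are given as functions a b c :: nat => complex, with a j = a_(j+1) for j < k
(values at j >= k are irrelevant). Sequences in l2(N) are functions nat => complex,
the paper's index i corresponding to n = i - 1.\<close>

definition is_l2 :: "(nat \<Rightarrow> complex) \<Rightarrow> bool" where
  "is_l2 x \<longleftrightarrow> summable (\<lambda>n. (cmod (x n))\<^sup>2)"

definition l2_norm :: "(nat \<Rightarrow> complex) \<Rightarrow> real" where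
  "l2_norm x = sqrt (\<Sum>n. (cmod (x n))\<^sup>2)"

definition ktoep_apply ::
  "nat \<Rightarrow> (nat \<Rightarrow> complex) \<Rightarrow> (nat \<Rightarrow> complex) \<Rightarrow> (nat \<Rightarrow> complex) \<Rightarrow> (nat \<Rightarrow> complex) \<Rightarrow> nat \<Rightarrow> complex"
  where
  "ktoep_apply k a b c x n =
     a (n mod k) * x n + b (n mod k) * x (Suc n)
     + (if n = 0 then 0 else c ((n - 1) mod k) * x (n - 1))"

definition A0 :: "nat \<Rightarrow> (nat \<Rightarrow> complex) \<Rightarrow> (nat \<Rightarrow> complex) \<Rightarrow> (nat \<Rightarrow> complex) \<Rightarrow> complex mat" where
  "A0 k a b c = mat k k (\<lambda>(i, j).
      (if i = j then a i else 0)
    + (if j = Suc i then b i else 0)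
    + (if i = Suc j then c j else 0))"

text \<open>Symbol f(z) = A_(-1) z^(-1) + A_0 + A_1 z: A_0 with c_k z added at (1,k) and
b_k z^(-1) added at (k,1) (1-based), i.e. positions (0,k-1) and (k-1,0) 0-based.\<close>
definition symbol :: "nat \<Rightarrow> (nat \<Rightarrow> complex) \<Rightarrow> (nat \<Rightarrow> complex) \<Rightarrow> (nat \<Rightarrow> complex) \<Rightarrow> complex \<Rightarrow> complex mat" where
  "symbol k a b c z = mat k k (\<lambda>(i, j).
      A0 k a b c $$ (i, j)
    + (if i = 0 \<and> j = k - 1 then c (k - 1) * z else 0)
    + (if i = k - 1 \<and> j = 0 then b (k - 1) / z else 0))"

definition trivial_kernel :: "nat \<Rightarrow> (nat \<Rightarrow> complex) \<Rightarrow> (nat \<Rightarrow> complex) \<Rightarrow> (nat \<Rightarrow> complex) \<Rightarrow> bool" where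
  "trivial_kernel k a b c \<longleftrightarrow>
     (\<forall>x. is_l2 x \<and> ktoep_apply k a b c x = (\<lambda>_. 0) \<longrightarrow> x = (\<lambda>_. 0))"

definition dense_range :: "nat \<Rightarrow> (nat \<Rightarrow> complex) \<Rightarrow> (nat \<Rightarrow> complex) \<Rightarrow> (nat \<Rightarrow> complex) \<Rightarrow> bool" where
  "dense_range k a b c \<longleftrightarrow>
     (\<forall>y. is_l2 y \<longrightarrow> (\<forall>\<epsilon>>0. \<exists>x. is_l2 x \<and>
        l2_norm (\<lambda>n. ktoep_apply k a b c x n - y n) < \<epsilon>))"

end

theory Submission
  imports Defs "HOL-Computational_Algebra.Polynomial_FPS"
begin

(* Let x be a nonzero kernel vector of T(f). Cutting x into blocks of length k and passing to
   the vector X(t) of generating functions, the block Toeplitz structure of T(f) becomes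
   t f(t) X(t) = A_{-1} X(0) = b_k x_1 e_k. As det (t f(t)) is a nonzero polynomial, t f(t) is
   invertible over formal power series, so b_k x_1 <> 0. Shifting x by j blocks then yields a
   preimage of the unit vector e_{jk}. If the leading (k-1) x (k-1) block of A_0 is invertible,
   every other unit vector e_n is, up to multiples of the e_{jk}, the image of a vector supported
   in the block containing n. So all finitely supported sequences lie in the range of T(f),
   which is therefore dense. *)

interpretation fps_of_poly_hom: comm_ring_hom "fps_of_poly :: complex poly \<Rightarrow> complex fps"
  by unfold_locales (simp_all add: fps_of_poly_add fps_of_poly_mult)

interpretation poly_eval_hom: comm_ring_hom "\<lambda>p :: complex poly. poly p z" for z
  by unfold_locales simp_all

lemma dvd_Suc_iff_mod_eq_pred:
  fixes k p :: nat
  assumes "k \<ge> 1"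
  shows "k dvd Suc p \<longleftrightarrow> p mod k = k - 1"
  using assms by (auto simp: dvd_eq_mod_eq_0 mod_Suc)

lemma fps_nth_quadratic_mult:
  fixes F :: "'a::comm_ring_1 fps"
  shows "fps_nth (fps_of_poly [:\<alpha>, \<beta>, \<gamma>:] * F) m
   = \<alpha> * fps_nth F m + (if m = 0 then 0 else \<beta> * fps_nth F (m - 1))
     + (if m < 2 then 0 else \<gamma> * fps_nth F (m - 2))"
proof -
  have "fps_of_poly [:\<alpha>, \<beta>, \<gamma>:] * F
      = fps_const \<alpha> * F + fps_X * (fps_const \<beta> * F) + fps_X ^ 2 * (fps_const \<gamma> * F)"
    by (simp add: fps_of_poly_pCons algebra_simps power2_eq_square)
  then show ?thesis
    by (simp only: fps_add_nth fps_X_mult_nth fps_X_power_mult_nth fps_mult_left_const_nth)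
qed

lemma mult_mat_vec_solvable_if_ker_trivial:
  fixes M :: "'a::field mat"
  assumes M: "M \<in> carrier_mat n n"
    and ker: "\<And>v. v \<in> carrier_vec n \<Longrightarrow> M *\<^sub>v v = 0\<^sub>v n \<Longrightarrow> v = 0\<^sub>v n"
    and "e \<in> carrier_vec n"
  obtains v where "v \<in> carrier_vec n" and "M *\<^sub>v v = e"
proof -
  have "det M \<noteq> 0"
    using ker unfolding det_0_iff_vec_prod_zero[OF M] by auto
  then obtain B where B: "B \<in> carrier_mat n n" "M * B = 1\<^sub>m n"
    using det_non_zero_imp_unit[OF M] unfolding Units_def ring_mat_def by auto
  with M \<open>e \<in> carrier_vec n\<close> have "M *\<^sub>v (B *\<^sub>v e) = e"
    by (simp add: assoc_mult_mat_vec[symmetric])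
  with B \<open>e \<in> carrier_vec n\<close> show ?thesis
    by (intro that[of "B *\<^sub>v e"]) auto
qed

lemma A0_row_sum:
  assumes "i < k"
  shows "(\<Sum>j<k. A0 k a b c $$ (i, j) * v j)
       = a i * v i + (if Suc i < k then b i * v (Suc i) else 0)
         + (if 1 \<le> i then c (i - 1) * v (i - 1) else 0)"
proof -
  have "(\<Sum>j<k. A0 k a b c $$ (i, j) * v j)
      = (\<Sum>j<k. (if j = i then a i * v i else 0) + (if j = Suc i then b i * v (Suc i) else 0)
                + (if 1 \<le> i then if j = i - 1 then c (i - 1) * v (i - 1) else 0 else 0))"
    by (rule sum.cong) (use assms in \<open>auto simp: A0_def\<close>)
  then show ?thesis
    using assms by (auto simp: sum.distrib)
qed

lemma ktoep_apply_block:
  assumes "i < k"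
  shows "ktoep_apply k a b c x (q * k + i) =
      (\<Sum>j<k. A0 k a b c $$ (i, j) * x (q * k + j))
    + (if i = k - 1 then b (k - 1) * x (Suc q * k) else 0)
    + (if i = 0 \<and> q \<ge> 1 then c (k - 1) * x (q * k - 1) else 0)"
proof -
  define p where "p = q * k + i"
  have p_mod: "p mod k = i"
    using assms by (simp add: p_def)
  have b_part: "b i * x (Suc p)
      = (if Suc i < k then b i * x (q * k + Suc i) else 0)
      + (if i = k - 1 then b (k - 1) * x (Suc q * k) else 0)"
    using assms by (auto simp: p_def add.commute)
  have c_part: "(if p = 0 then 0 else c ((p - 1) mod k) * x (p - 1))
      = (if 1 \<le> i then c (i - 1) * x (q * k + (i - 1)) else 0)
      + (if i = 0 \<and> q \<ge> 1 then c (k - 1) * x (q * k - 1) else 0)"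
  proof (cases "i = 0")
    case True
    have "(p - 1) mod k = k - 1" if "p \<noteq> 0"
      using that True assms dvd_Suc_iff_mod_eq_pred[of k "p - 1"] by (simp add: p_def)
    moreover have "p \<noteq> 0 \<longleftrightarrow> q \<ge> 1" and "p - 1 = q * k - 1"
      using True assms by (auto simp: p_def)
    ultimately show ?thesis
      using True by (cases "p = 0") simp_all
  next
    case False
    then have "p \<noteq> 0" and p_pred: "p - 1 = q * k + (i - 1)"
      by (simp_all add: p_def)
    moreover have "(p - 1) mod k = i - 1"
      unfolding p_pred using assms by simp
    ultimately show ?thesis
      using False by simp
  qed
  have "(\<Sum>j<k. A0 k a b c $$ (i, j) * x (q * k + j))
      = a i * x (q * k + i) + (if Suc i < k then b i * x (q * k + Suc i) else 0)
        + (if 1 \<le> i then c (i - 1) * x (q * k + (i - 1)) else 0)"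
    by (rule A0_row_sum[OF assms])
  then show ?thesis
    unfolding p_def[symmetric] ktoep_apply_def p_mod b_part c_part by (simp add: p_def)
qed

(* The matrix polynomial z f(z) = A_{-1} + A_0 z + A_1 z^2. *)
definition symbol_poly ::
  "nat \<Rightarrow> (nat \<Rightarrow> complex) \<Rightarrow> (nat \<Rightarrow> complex) \<Rightarrow> (nat \<Rightarrow> complex) \<Rightarrow> complex poly mat" where
  "symbol_poly k a b c = mat k k (\<lambda>(i, j).
     [:if i = k - 1 \<and> j = 0 then b (k - 1) else 0,
       A0 k a b c $$ (i, j),
       if i = 0 \<and> j = k - 1 then c (k - 1) else 0:])"

lemma poly_symbol_poly:
  assumes "z \<noteq> 0"
  shows "map_mat (\<lambda>p. poly p z) (symbol_poly k a b c) = z \<cdot>\<^sub>m symbol k a b c z"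
  by (rule eq_matI) (use assms in \<open>auto simp: symbol_poly_def symbol_def algebra_simps\<close>)

lemma det_symbol_poly_neq_0:
  assumes "z \<noteq> 0" and "det (symbol k a b c z) \<noteq> 0"
  shows "det (symbol_poly k a b c) \<noteq> 0"
proof
  assume "det (symbol_poly k a b c) = 0"
  then have "det (z \<cdot>\<^sub>m symbol k a b c z) = 0"
    by (metis assms(1) poly_0 poly_symbol_poly poly_eval_hom.hom_det)
  with assms show False
    by (simp add: symbol_def)
qed

definition block_fps :: "nat \<Rightarrow> (nat \<Rightarrow> complex) \<Rightarrow> complex fps vec" where
  "block_fps k x = vec k (\<lambda>j. Abs_fps (\<lambda>m. x (m * k + j)))"

lemma fps_nth_symbol_poly_mult_block_fps:
  assumes "k \<ge> 1" and "i < k"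
  shows "fps_nth ((map_mat fps_of_poly (symbol_poly k a b c) *\<^sub>v block_fps k x) $ i) m =
    (if m = 0 then (if i = k - 1 then b (k - 1) * x 0 else 0)
     else ktoep_apply k a b c x ((m - 1) * k + i))"
proof -
  have "fps_nth ((map_mat fps_of_poly (symbol_poly k a b c) *\<^sub>v block_fps k x) $ i) m
      = (\<Sum>j<k. (if i = k - 1 \<and> j = 0 then b (k - 1) else 0) * x (m * k + j))
      + (if m = 0 then 0 else \<Sum>j<k. A0 k a b c $$ (i, j) * x ((m - 1) * k + j))
      + (if m < 2 then 0 else
           \<Sum>j<k. (if i = 0 \<and> j = k - 1 then c (k - 1) else 0) * x ((m - 2) * k + j))"
    using assms
    by (simp add: symbol_poly_def block_fps_def scalar_prod_def lessThan_atLeast0 fps_sum_nth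
        fps_nth_quadratic_mult sum.distrib sum_distrib_left)
  also have "\<dots> = (if i = k - 1 then b (k - 1) * x (m * k) else 0)
      + (if m = 0 then 0 else \<Sum>j<k. A0 k a b c $$ (i, j) * x ((m - 1) * k + j))
      + (if m < 2 \<or> i \<noteq> 0 then 0 else c (k - 1) * x ((m - 1) * k - 1))"
  proof -
    have "(m - 2) * k + (k - 1) = (m - 1) * k - 1" if "m \<ge> 2"
    proof -
      from that have "m - 1 = Suc (m - 2)"
        by arith
      with assms show ?thesis
        by simp
    qed
    then show ?thesis
      using assms by (simp add: if_distrib[of "\<lambda>u. u * _"] cong: if_cong)
  qed
  finally show ?thesis
    using assms by (cases m) (auto simp: ktoep_apply_block)
qed

lemma ktoep_kernel_vector_eq_0:
  assumes "k \<ge> 1" and "z \<noteq> 0" and "det (symbol k a b c z) \<noteq> 0"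
    and kernel: "ktoep_apply k a b c x = (\<lambda>_. 0)" and boundary: "b (k - 1) * x 0 = 0"
  shows "x = (\<lambda>_. 0)"
proof -
  let ?Q = "map_mat fps_of_poly (symbol_poly k a b c)"
  have Q_carrier: "?Q \<in> carrier_mat k k"
    by (simp add: symbol_poly_def)
  have "(?Q *\<^sub>v block_fps k x) $ i = 0" if "i < k" for i
  proof (rule fps_ext)
    fix m
    show "fps_nth ((?Q *\<^sub>v block_fps k x) $ i) m = fps_nth 0 m"
      using fps_nth_symbol_poly_mult_block_fps[OF assms(1) that] kernel boundary by simp
  qed
  then have "?Q *\<^sub>v block_fps k x = 0\<^sub>v k"
    using Q_carrier by (intro eq_vecI) auto
  moreover have "block_fps k x \<in> carrier_vec k"
    by (simp add: block_fps_def)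
  moreover have "det ?Q \<noteq> 0"
    using det_symbol_poly_neq_0[OF assms(2,3)] by simp
  ultimately have "block_fps k x = 0\<^sub>v k"
    unfolding det_0_iff_vec_prod_zero[OF Q_carrier] by auto
  then have "fps_nth (block_fps k x $ (n mod k)) (n div k) = 0" for n
    using assms(1) by simp
  then show ?thesis
    using assms(1) by (auto simp: block_fps_def)
qed

lemma is_l2_add:
  assumes "is_l2 x" and "is_l2 y"
  shows "is_l2 (\<lambda>n. x n + y n)"
proof -
  have bound: "norm ((cmod (x n + y n))\<^sup>2) \<le> 2 * (cmod (x n))\<^sup>2 + 2 * (cmod (y n))\<^sup>2" for n
  proof -
    have "(cmod (x n + y n))\<^sup>2 \<le> (cmod (x n) + cmod (y n))\<^sup>2"
      by (simp add: norm_triangle_ineq power_mono)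
    also have "\<dots> \<le> 2 * (cmod (x n))\<^sup>2 + 2 * (cmod (y n))\<^sup>2"
      using sum_squares_bound[of "cmod (x n)" "cmod (y n)"] by (simp add: power2_sum)
    finally show ?thesis
      by simp
  qed
  have "summable (\<lambda>n. 2 * (cmod (x n))\<^sup>2 + 2 * (cmod (y n))\<^sup>2)"
    using assms unfolding is_l2_def by (intro summable_add summable_mult)
  then show ?thesis
    unfolding is_l2_def using bound by (rule summable_comparison_test')
qed

lemma is_l2_cmult: "is_l2 x \<Longrightarrow> is_l2 (\<lambda>n. \<alpha> * x n)"
  unfolding is_l2_def by (simp add: norm_mult power_mult_distrib summable_mult)

lemma is_l2_finite_support: "(\<And>n. n \<ge> N \<Longrightarrow> x n = 0) \<Longrightarrow> is_l2 x"
  unfolding is_l2_def by (rule summable_finite[of "{..<N}"]) auto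

lemma is_l2_shift: "is_l2 x \<Longrightarrow> is_l2 (\<lambda>n. if n < s then 0 else x (n - s))"
  unfolding is_l2_def by (subst summable_iff_shift[of _ s, symmetric]) simp

lemma ktoep_apply_add:
  "ktoep_apply k a b c (\<lambda>n. x n + y n) p = ktoep_apply k a b c x p + ktoep_apply k a b c y p"
  by (simp add: ktoep_apply_def algebra_simps)

lemma ktoep_apply_cmult:
  "ktoep_apply k a b c (\<lambda>n. \<alpha> * x n) p = \<alpha> * ktoep_apply k a b c x p"
  by (simp add: ktoep_apply_def algebra_simps)

definition in_ktoep_range ::
  "nat \<Rightarrow> (nat \<Rightarrow> complex) \<Rightarrow> (nat \<Rightarrow> complex) \<Rightarrow> (nat \<Rightarrow> complex) \<Rightarrow> (nat \<Rightarrow> complex) \<Rightarrow> bool"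
  where "in_ktoep_range k a b c y \<longleftrightarrow> (\<exists>x. is_l2 x \<and> ktoep_apply k a b c x = y)"

lemma in_ktoep_range_lincomb:
  assumes "in_ktoep_range k a b c y" and "in_ktoep_range k a b c y'"
  shows "in_ktoep_range k a b c (\<lambda>n. y n + \<alpha> * y' n)"
proof -
  from assms obtain x x' where "is_l2 x" "ktoep_apply k a b c x = y"
    and "is_l2 x'" "ktoep_apply k a b c x' = y'"
    unfolding in_ktoep_range_def by blast
  then show ?thesis
    unfolding in_ktoep_range_def
    by (intro exI[of _ "\<lambda>n. x n + \<alpha> * x' n"])
      (auto simp: is_l2_add is_l2_cmult ktoep_apply_add ktoep_apply_cmult)
qed

definition unit_seq :: "nat \<Rightarrow> nat \<Rightarrow> complex" where
  "unit_seq n = (\<lambda>p. if p = n then 1 else 0)"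

lemma in_ktoep_range_finite_support:
  assumes units: "\<And>p. p \<in> S \<Longrightarrow> in_ktoep_range k a b c (unit_seq p)"
    and support: "\<And>p. y p \<noteq> 0 \<Longrightarrow> p \<in> S \<and> p < N"
  shows "in_ktoep_range k a b c y"
  using support
proof (induction N arbitrary: y)
  case 0
  then have "y = (\<lambda>_. 0)"
    by auto
  then show ?case
    unfolding in_ktoep_range_def
    by (intro exI[of _ "\<lambda>_. 0"]) (auto simp: ktoep_apply_def is_l2_finite_support)
next
  case (Suc N)
  have lower: "in_ktoep_range k a b c (y(N := 0))"
  proof (rule Suc.IH)
    fix p
    assume "(y(N := 0)) p \<noteq> 0"
    then have "p \<noteq> N" and "y p \<noteq> 0"
      by (auto split: if_splits)
    with Suc.prems[of p] show "p \<in> S \<and> p < N"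
      by simp
  qed
  show ?case
  proof (cases "y N = 0")
    case True
    with lower show ?thesis
      by (simp add: fun_upd_idem)
  next
    case False
    then have "in_ktoep_range k a b c (\<lambda>p. (y(N := 0)) p + y N * unit_seq N p)"
      using Suc.prems by (intro in_ktoep_range_lincomb lower units) blast
    moreover have "(\<lambda>p. (y(N := 0)) p + y N * unit_seq N p) = y"
      by (auto simp: unit_seq_def)
    ultimately show ?thesis
      by simp
  qed
qed

lemma dense_range_if_units_in_range:
  assumes units: "\<And>n. in_ktoep_range k a b c (unit_seq n)"
  shows "dense_range k a b c"
  unfolding dense_range_def
proof (intro allI impI)
  fix y :: "nat \<Rightarrow> complex" and \<epsilon> :: real
  assume "is_l2 y" and "\<epsilon> > 0"
  define g where "g n = (cmod (y n))\<^sup>2" for n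
  have "summable g"
    using \<open>is_l2 y\<close> unfolding is_l2_def g_def .
  then obtain N where tail: "norm (\<Sum>i. g (i + N)) < \<epsilon>\<^sup>2"
    using suminf_exist_split[of "\<epsilon>\<^sup>2" g] \<open>\<epsilon> > 0\<close> by auto
  have "in_ktoep_range k a b c (\<lambda>n. if n < N then y n else 0)"
    by (rule in_ktoep_range_finite_support[where S = UNIV and N = N])
      (auto intro: units split: if_splits)
  then obtain x where "is_l2 x" and x: "ktoep_apply k a b c x = (\<lambda>n. if n < N then y n else 0)"
    unfolding in_ktoep_range_def by blast
  have "summable (\<lambda>i. g (i + N))"
    using \<open>summable g\<close> by (subst summable_iff_shift)
  then have "(\<lambda>i. g (i + N)) sums (\<Sum>i. g (i + N))"
    by (rule summable_sums)
  then have "(\<lambda>n. if n < N then 0 else g n) sums (\<Sum>i. g (i + N))"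
    using sums_iff_shift[of "\<lambda>n. if n < N then 0 else g n" N] by simp
  moreover have "(\<lambda>n. (cmod (ktoep_apply k a b c x n - y n))\<^sup>2) = (\<lambda>n. if n < N then 0 else g n)"
    by (auto simp: x g_def)
  ultimately have "l2_norm (\<lambda>n. ktoep_apply k a b c x n - y n) = sqrt (\<Sum>i. g (i + N))"
    by (simp add: l2_norm_def sums_iff)
  also have "\<dots> < \<epsilon>"
    using tail \<open>\<epsilon> > 0\<close> by (intro real_less_lsqrt) auto
  finally show "\<exists>x. is_l2 x \<and> l2_norm (\<lambda>n. ktoep_apply k a b c x n - y n) < \<epsilon>"
    using \<open>is_l2 x\<close> by blast
qed

lemma ktoep_apply_shift:
  assumes "k \<ge> 1" and "j \<ge> 1"
  shows "ktoep_apply k a b c (\<lambda>n. if n < j * k then 0 else x (n - j * k)) p =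
    (if Suc p < j * k then 0
     else if Suc p = j * k then b (k - 1) * x 0
     else ktoep_apply k a b c x (p - j * k))"
proof -
  consider (before) "Suc p < j * k" | (boundary) "Suc p = j * k" | (after) "Suc p > j * k"
    by linarith
  then show ?thesis
  proof cases
    case before
    then show ?thesis
      by (simp add: ktoep_apply_def)
  next
    case boundary
    then have "p mod k = k - 1"
      using assms(1) dvd_Suc_iff_mod_eq_pred[of k p] by simp
    with boundary show ?thesis
      by (simp add: ktoep_apply_def)
  next
    case after
    define q where "q = p - j * k"
    with after have p: "p = j * k + q"
      by simp
    let ?u = "\<lambda>n. if n < j * k then 0 else x (n - j * k)"
    have jk: "j * k \<ge> 1"
      using assms by simp
    have u: "?u p = x q" "?u (Suc p) = x (Suc q)" "?u (p - 1) = (if q = 0 then 0 else x (q - 1))"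
      using p jk by auto
    have "(p - 1) mod k = (q - 1) mod k" if "q \<noteq> 0"
    proof -
      from that p have "p - 1 = j * k + (q - 1)"
        by simp
      then show ?thesis
        by simp
    qed
    moreover have "p mod k = q mod k" "p \<noteq> 0" "\<not> Suc p \<le> j * k" "p - j * k = q"
      using p jk by auto
    ultimately show ?thesis
      unfolding ktoep_apply_def u by simp
  qed
qed

lemma unit_seq_in_ktoep_range_block_end:
  assumes "k \<ge> 1" and "is_l2 x" and kernel: "ktoep_apply k a b c x = (\<lambda>_. 0)"
    and boundary: "b (k - 1) * x 0 \<noteq> 0" and "k dvd Suc n"
  shows "in_ktoep_range k a b c (unit_seq n)"
proof -
  obtain j where j: "Suc n = j * k"
    using \<open>k dvd Suc n\<close> by (metis dvd_def mult.commute)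
  then have "j \<ge> 1"
    by (cases j) auto
  let ?u = "\<lambda>m. (1 / (b (k - 1) * x 0)) * (if m < j * k then 0 else x (m - j * k))"
  have "is_l2 ?u"
    by (intro is_l2_cmult is_l2_shift \<open>is_l2 x\<close>)
  moreover have "ktoep_apply k a b c ?u = unit_seq n"
  proof
    fix p
    show "ktoep_apply k a b c ?u p = unit_seq n p"
      unfolding ktoep_apply_cmult ktoep_apply_shift[OF assms(1) \<open>j \<ge> 1\<close>]
      using j boundary by (simp add: kernel unit_seq_def)
  qed
  ultimately show ?thesis
    unfolding in_ktoep_range_def by blast
qed

abbreviation leading_block ::
  "nat \<Rightarrow> (nat \<Rightarrow> complex) \<Rightarrow> (nat \<Rightarrow> complex) \<Rightarrow> (nat \<Rightarrow> complex) \<Rightarrow> complex mat" where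
  "leading_block k a b c \<equiv> mat (k - 1) (k - 1) (\<lambda>(i, j). A0 k a b c $$ (i, j))"

lemma ktoep_apply_leading_block:
  assumes "k \<ge> 1" and "i < k - 1" and block_ends: "\<And>p. k dvd Suc p \<Longrightarrow> x p = 0"
  shows "ktoep_apply k a b c x (q * k + i)
       = (leading_block k a b c *\<^sub>v vec (k - 1) (\<lambda>j. x (q * k + j))) $ i"
proof -
  have "x (q * k + (k - 1)) = 0"
    by (rule block_ends) (use assms(1) in simp)
  then have "(\<Sum>j<k. A0 k a b c $$ (i, j) * x (q * k + j))
      = (\<Sum>j<k - 1. A0 k a b c $$ (i, j) * x (q * k + j))"
    using assms(1) sum.lessThan_Suc[of "\<lambda>j. A0 k a b c $$ (i, j) * x (q * k + j)" "k - 1"] by simp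
  moreover have "x (q * k - 1) = 0" if "q \<ge> 1"
    by (rule block_ends) (use that assms(1) in simp)
  ultimately show ?thesis
    using assms(1,2) by (simp add: ktoep_apply_block scalar_prod_def lessThan_atLeast0)
qed

lemma ktoep_preimage_off_block_ends:
  assumes "k \<ge> 1"
    and leading_block_ker: "\<not> (\<exists>v :: complex vec. dim_vec v = k - 1 \<and> v \<noteq> 0\<^sub>v (k - 1) \<and>
            leading_block k a b c *\<^sub>v v = 0\<^sub>v (k - 1))"
    and "\<not> k dvd Suc n"
  obtains x where "is_l2 x"
    and "\<And>p. \<not> k dvd Suc p \<Longrightarrow> ktoep_apply k a b c x p = unit_seq n p"
    and "\<And>p. p > Suc (n div k) * k \<Longrightarrow> ktoep_apply k a b c x p = 0"
proof -
  have off_end: "p mod k < k - 1" if "\<not> k dvd Suc p" for p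
    using that assms(1) dvd_Suc_iff_mod_eq_pred[of k p] mod_less_divisor[of k p] by linarith
  define q where "q = n div k"
  have "w = 0\<^sub>v (k - 1)"
    if "w \<in> carrier_vec (k - 1)" and "leading_block k a b c *\<^sub>v w = 0\<^sub>v (k - 1)" for w
    using that leading_block_ker by (blast dest: carrier_vecD)
  then obtain v where v: "v \<in> carrier_vec (k - 1)"
    and Mv: "leading_block k a b c *\<^sub>v v = unit_vec (k - 1) (n mod k)"
    using mult_mat_vec_solvable_if_ker_trivial[OF mat_carrier] unit_vec_carrier by blast
  define x where "x p = (if p div k = q \<and> p mod k < k - 1 then v $ (p mod k) else 0)" for p
  have block_ends: "x p = 0" if "k dvd Suc p" for p
    using that assms(1) by (simp add: x_def dvd_Suc_iff_mod_eq_pred)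
  have beyond: "x p = 0" if "p \<ge> Suc q * k" for p
  proof -
    have "Suc q \<le> p div k"
      using div_le_mono[OF that, of k] assms(1) by simp
    then show ?thesis
      by (simp add: x_def)
  qed
  have x_block: "x (m * k + j) = (if m = q then v $ j else 0)" if "j < k - 1" for m j
    using that by (simp add: x_def)
  show ?thesis
  proof
    show "is_l2 x"
      using beyond by (rule is_l2_finite_support)
  next
    fix p
    assume "\<not> k dvd Suc p"
    have "ktoep_apply k a b c x p
        = (leading_block k a b c *\<^sub>v vec (k - 1) (\<lambda>j. x (p div k * k + j))) $ (p mod k)"
      using ktoep_apply_leading_block[OF assms(1) off_end[OF \<open>\<not> k dvd Suc p\<close>] block_ends,
          where q = "p div k"]
      unfolding div_mult_mod_eq .
    also have "vec (k - 1) (\<lambda>j. x (p div k * k + j)) = (if p div k = q then v else 0\<^sub>v (k - 1))"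
      using v by (intro eq_vecI) (auto simp: x_block)
    also have "(leading_block k a b c *\<^sub>v (if p div k = q then v else 0\<^sub>v (k - 1))) $ (p mod k)
        = (if p div k = q \<and> p mod k = n mod k then 1 else 0)"
      using Mv off_end[OF \<open>\<not> k dvd Suc p\<close>]
      by (cases "p div k = q") (simp_all add: unit_vec_def)
    also have "\<dots> = unit_seq n p"
      unfolding unit_seq_def q_def by (metis div_mult_mod_eq)
    finally show "ktoep_apply k a b c x p = unit_seq n p" .
  next
    fix p
    assume "p > Suc (n div k) * k"
    then show "ktoep_apply k a b c x p = 0"
      by (simp add: ktoep_apply_def beyond q_def)
  qed
qed

lemma unit_seq_in_ktoep_range_off_block_end:
  assumes "k \<ge> 1"
    and block_end_units: "\<And>p. k dvd Suc p \<Longrightarrow> in_ktoep_range k a b c (unit_seq p)"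
    and leading_block_ker: "\<not> (\<exists>v :: complex vec. dim_vec v = k - 1 \<and> v \<noteq> 0\<^sub>v (k - 1) \<and>
            leading_block k a b c *\<^sub>v v = 0\<^sub>v (k - 1))"
    and "\<not> k dvd Suc n"
  shows "in_ktoep_range k a b c (unit_seq n)"
proof -
  define q where "q = n div k"
  define N where "N = Suc (Suc q * k)"
  obtain x where "is_l2 x"
    and off_ends: "\<And>p. \<not> k dvd Suc p \<Longrightarrow> ktoep_apply k a b c x p = unit_seq n p"
    and beyond: "\<And>p. p > Suc q * k \<Longrightarrow> ktoep_apply k a b c x p = 0"
    using ktoep_preimage_off_block_ends[OF assms(1) leading_block_ker \<open>\<not> k dvd Suc n\<close>]
    unfolding q_def by blast
  have "n = q * k + n mod k"
    by (simp add: q_def)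
  moreover have "n mod k < k"
    using assms(1) by simp
  ultimately have "n < N"
    by (simp add: N_def)
  have "in_ktoep_range k a b c (\<lambda>p. ktoep_apply k a b c x p - unit_seq n p)"
  proof (rule in_ktoep_range_finite_support[where S = "{p. k dvd Suc p}" and N = N])
    fix p
    assume nonzero: "ktoep_apply k a b c x p - unit_seq n p \<noteq> 0"
    then have "k dvd Suc p"
      using off_ends by auto
    moreover have "p < N"
    proof (rule ccontr)
      assume "\<not> p < N"
      with nonzero beyond \<open>n < N\<close> show False
        by (simp add: N_def unit_seq_def)
    qed
    ultimately show "p \<in> {p. k dvd Suc p} \<and> p < N"
      by simp
  qed (use block_end_units in simp)
  moreover have "in_ktoep_range k a b c (ktoep_apply k a b c x)"
    unfolding in_ktoep_range_def using \<open>is_l2 x\<close> by blast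
  ultimately have "in_ktoep_range k a b c
      (\<lambda>p. ktoep_apply k a b c x p + (- 1) * (ktoep_apply k a b c x p - unit_seq n p))"
    by (rule in_ktoep_range_lincomb[rotated])
  then show ?thesis
    by simp
qed

theorem theorem2p3:
  fixes k :: nat and a b c :: "nat \<Rightarrow> complex"
  assumes "k \<ge> 1"
    and "\<exists>z. cmod z = 1 \<and> det (symbol k a b c z) \<noteq> 0"
  shows "trivial_kernel k a b c
       \<or> dense_range k a b c
       \<or> (\<exists>v :: complex vec. dim_vec v = k - 1 \<and> v \<noteq> 0\<^sub>v (k - 1) \<and>
            mat (k - 1) (k - 1) (\<lambda>(i, j). A0 k a b c $$ (i, j)) *\<^sub>v v = 0\<^sub>v (k - 1))"
proof (cases "trivial_kernel k a b c")
  case False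
  then obtain x where x: "is_l2 x" "ktoep_apply k a b c x = (\<lambda>_. 0)" "x \<noteq> (\<lambda>_. 0)"
    unfolding trivial_kernel_def by blast
  obtain z where "cmod z = 1" and det: "det (symbol k a b c z) \<noteq> 0"
    using assms(2) by blast
  then have "z \<noteq> 0"
    by auto
  then have boundary: "b (k - 1) * x 0 \<noteq> 0"
    using ktoep_kernel_vector_eq_0[OF assms(1) _ det x(2)] x(3) by blast
  have block_end_units: "in_ktoep_range k a b c (unit_seq p)" if "k dvd Suc p" for p
    using unit_seq_in_ktoep_range_block_end[OF assms(1) x(1,2) boundary that] .
  show ?thesis
  proof (cases "\<exists>v :: complex vec. dim_vec v = k - 1 \<and> v \<noteq> 0\<^sub>v (k - 1) \<and>
                  leading_block k a b c *\<^sub>v v = 0\<^sub>v (k - 1)")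
    case False
    have "in_ktoep_range k a b c (unit_seq n)" for n
      using block_end_units unit_seq_in_ktoep_range_off_block_end[OF assms(1) block_end_units False]
      by blast
    then show ?thesis
      using dense_range_if_units_in_range by blast
  qed simp
qed simp

end
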